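(* Let $R$ and $Q$ be finite sequences of formulas and $I,J$ models. If $I\le_{\emptyset R\cdot Q}J$, then $I\le_{\emptyset Q}J$.
   Context: Propositional models are truth assignments over a finite set of variables; a formula used where a set of models is expected stands for its set of models. A doxastic state is a sequence $C=[C(0),\ldots,C(k)]$ of nonempty, pairwise disjoint sets of models covering all models; $I\le_C J$ iff $I\in C(i)$, $J\in C(j)$ with $i\le j$. The flat doxastic state $\emptyset$ is $[\text{all models}]$. Lexicographic revision: $C\,\mathrm{lex}(A)=[C(0)\cap A,\ldots,C(k)\cap A,C(0)\setminus A,\ldots,C(k)\setminus A]$, empty sets discarded. For a sequence of formulas $T=[T_1,\ldots,T_n]$, $\emptyset T$ denotes $\emptyset$ revised lexicographically by $T_1$, then $T_2$, ..., then $T_n$. $R\cdot Q$ is concatenation. *)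

theory Defs
  imports Main
begin

type_synonym 'v model = "'v \<Rightarrow> bool"

datatype 'v form =
    FTrue
  | FFalse
  | Var 'v
  | Neg "'v form"
  | Conj "'v form" "'v form"
  | Disj "'v form" "'v form"
  | Impl "'v form" "'v form"

primrec sat :: "'v model \<Rightarrow> 'v form \<Rightarrow> bool" where
  "sat I FTrue = True"
| "sat I FFalse = False"
| "sat I (Var v) = I v"
| "sat I (Neg F) = (\<not> sat I F)"
| "sat I (Conj F G) = (sat I F \<and> sat I G)"
| "sat I (Disj F G) = (sat I F \<or> sat I G)"
| "sat I (Impl F G) = (sat I F \<longrightarrow> sat I G)"

definition models :: "'v form \<Rightarrow> 'v model set" where
  "models F = {I. sat I F}"

type_synonym 'v dstate = "'v model set list"

definition doxastic_state :: "'v dstate \<Rightarrow> bool" where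
  "doxastic_state C \<longleftrightarrow>
     (\<forall>i < length C. C ! i \<noteq> {}) \<and>
     (\<forall>i < length C. \<forall>j < length C. i \<noteq> j \<longrightarrow> C ! i \<inter> C ! j = {}) \<and>
     (\<Union> (set C) = UNIV)"

definition le_state :: "'v dstate \<Rightarrow> 'v model \<Rightarrow> 'v model \<Rightarrow> bool" where
  "le_state C I J \<longleftrightarrow>
     (\<exists>i < length C. \<exists>j < length C. I \<in> C ! i \<and> J \<in> C ! j \<and> i \<le> j)"

definition flat :: "'v dstate" where
  "flat = [UNIV]"

definition lex :: "'v dstate \<Rightarrow> 'v form \<Rightarrow> 'v dstate" where
  "lex C A = filter (\<lambda>S. S \<noteq> {})
     (map (\<lambda>S. S \<inter> models A) C @ map (\<lambda>S. S - models A) C)"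

text \<open>\<emptyset>T: the flat state revised lexicographically by T_1, then T_2, ..., T_n.\<close>
definition revise_seq :: "'v form list \<Rightarrow> 'v dstate" where
  "revise_seq T = foldl lex flat T"

end

theory Submission
  imports Defs
begin

text \<open>Revising lexicographically by \<open>A\<close> ranks \<open>I\<close> below \<open>J\<close> exactly when \<open>I\<close> satisfies \<open>A\<close>
  and \<open>J\<close> does not, or when they agree on \<open>A\<close> and \<open>I\<close> was ranked below \<open>J\<close> before. So the
  order after a revision depends monotonically on the order before it. Since the flat state
  relates every pair of models, revising \<open>\<emptyset>R\<close> by \<open>Q\<close> yields a sub-relation of \<open>\<emptyset>Q\<close>.\<close>

lemma le_state_Nil [simp]: "\<not> le_state [] I J"
  by (simp add: le_state_def)

lemma le_state_Cons [simp]: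
  "le_state (S # C) I J \<longleftrightarrow> (I \<in> S \<and> J \<in> \<Union> (set (S # C))) \<or> le_state C I J"
proof
  assume "le_state (S # C) I J"
  then obtain i j where ij: "i \<le> j" "j < Suc (length C)" "I \<in> (S # C) ! i" "J \<in> (S # C) ! j"
    by (auto simp: le_state_def)
  show "(I \<in> S \<and> J \<in> \<Union> (set (S # C))) \<or> le_state C I J"
  proof (cases i)
    case 0
    then show ?thesis using ij nth_mem[of j "S # C"] by auto
  next
    case (Suc i')
    then obtain j' where "j = Suc j'" using ij by (cases j) auto
    then have "le_state C I J"
      using ij Suc unfolding le_state_def by (intro exI[of _ i'] conjI exI[of _ j']) auto
    then show ?thesis ..
  qed
next
  assume "(I \<in> S \<and> J \<in> \<Union> (set (S # C))) \<or> le_state C I J"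
  then show "le_state (S # C) I J"
  proof
    assume I_J: "I \<in> S \<and> J \<in> \<Union> (set (S # C))"
    then obtain j where "j < length (S # C)" "J \<in> (S # C) ! j"
      by (metis UnionE in_set_conv_nth)
    then show ?thesis using I_J unfolding le_state_def by (intro exI[of _ 0]) auto
  next
    assume "le_state C I J"
    then obtain i j where "i \<le> j" "j < length C" "I \<in> C ! i" "J \<in> C ! j"
      by (auto simp: le_state_def)
    then show ?thesis unfolding le_state_def
      by (intro exI[of _ "Suc i"] conjI exI[of _ "Suc j"]) auto
  qed
qed

lemma le_state_filter_nonempty:
  "le_state (filter (\<lambda>S. S \<noteq> {}) C) I J \<longleftrightarrow> le_state C I J"
proof (induction C)
  case (Cons S C)
  have "\<Union> (set (filter (\<lambda>S. S \<noteq> {}) C)) = \<Union> (set C)" by auto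
  then show ?case using Cons by auto
qed simp

lemma le_state_append:
  "le_state (C @ D) I J \<longleftrightarrow>
     le_state C I J \<or> le_state D I J \<or> (I \<in> \<Union> (set C) \<and> J \<in> \<Union> (set D))"
  by (induction C) auto

lemma le_state_map_inter:
  "le_state (map (\<lambda>S. S \<inter> X) C) I J \<longleftrightarrow> I \<in> X \<and> J \<in> X \<and> le_state C I J"
  by (induction C) auto

lemma le_state_map_diff:
  "le_state (map (\<lambda>S. S - X) C) I J \<longleftrightarrow> I \<notin> X \<and> J \<notin> X \<and> le_state C I J"
  by (induction C) auto

lemma le_state_lex:
  assumes "\<Union> (set C) = UNIV"
  shows "le_state (lex C A) I J \<longleftrightarrow>
     (I \<in> models A \<and> J \<notin> models A) \<or>
     ((I \<in> models A \<longleftrightarrow> J \<in> models A) \<and> le_state C I J)"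
  unfolding lex_def le_state_filter_nonempty le_state_append le_state_map_inter le_state_map_diff
  using assms by auto

lemma Union_set_foldl_lex:
  "\<Union> (set (foldl lex C T)) = \<Union> (set C)"
proof (induction T arbitrary: C)
  case (Cons A T)
  have "\<Union> (set (lex C A)) = \<Union> (set C)" unfolding lex_def by auto
  then show ?case using Cons by simp
qed simp

lemma Union_set_flat [simp]: "\<Union> (set flat) = UNIV"
  by (simp add: flat_def)

lemma le_state_flat: "le_state flat I J"
  by (simp add: flat_def)

lemma le_state_foldl_lex_mono:
  assumes "\<Union> (set C) = UNIV" "\<Union> (set D) = UNIV"
    and "\<And>I J. le_state C I J \<Longrightarrow> le_state D I J"
    and "le_state (foldl lex C T) I J"
  shows "le_state (foldl lex D T) I J"
  using assms(4)
proof (induction T arbitrary: I J rule: rev_induct)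
  case Nil
  then show ?case using assms(3) by simp
next
  case (snoc A T)
  have "\<Union> (set (foldl lex C T)) = UNIV" "\<Union> (set (foldl lex D T)) = UNIV"
    using assms(1,2) by (simp_all add: Union_set_foldl_lex)
  then show ?case using snoc by (auto simp: le_state_lex)
qed

theorem mainTheorem19:
  fixes R Q :: "('v::finite) form list" and I J :: "'v model"
  assumes "le_state (revise_seq (R @ Q)) I J"
  shows "le_state (revise_seq Q) I J"
proof -
  have "\<Union> (set (revise_seq R)) = UNIV"
    by (simp add: revise_seq_def Union_set_foldl_lex)
  moreover have "le_state (foldl lex (revise_seq R) Q) I J"
    using assms by (simp add: revise_seq_def)
  ultimately have "le_state (foldl lex flat Q) I J"
    using le_state_foldl_lex_mono[OF _ Union_set_flat le_state_flat] by blast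
  then show ?thesis
    by (simp add: revise_seq_def)
qed

end
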